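(* For nonnegative integers $a,c$ put $\overline{\mathrm{gf}}(a,c)=\mathrm{gf}(a,a,c,0)$ if $c\ge a$ and $\overline{\mathrm{gf}}(a,c)=0$ if $c<a$; explicitly, for $c\ge a$, $$\overline{\mathrm{gf}}(a,c)=(2q^a)^{a-c}\prod_{j=1}^{c-a}\frac{(Xq^{j-1}+Yq^{1-j})(1-q^{2a+2j})}{1-q^{2j}}.$$ Then for every positive integer $n$, every nonnegative integer $d$, and all nonnegative integers $a_1<a_2<\dots<a_n$ and $c_1<c_2<\dots<c_n$ with $a_i\le c_i$ for all $i$, $$\det\left(\overline{\mathrm{gf}}(a_i+d,c_j+d)\right)_{i,j=1}^n=\det\left(\overline{\mathrm{gf}}(a_i,c_j)\right)_{i,j=1}^n\cdot\prod_{k=1}^n\left(\frac{(q^{2d+2};q^2)_{c_k}}{q^{dc_k}(q^2;q^2)_{c_k}}\cdot\frac{q^{da_k}(q^2;q^2)_{a_k}}{(q^{2d+2};q^2)_{a_k}}\right).$$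
   Context: $X,Y,q$ are indeterminates and $(u;p)_n=\prod_{j=0}^{n-1}(1-up^j)$. Lattice paths in $\mathbb Z\times\mathbb Z$ use unit steps right, $(s,t)\to(s+1,t)$, and down, $(s,t)\to(s,t-1)$; a right step from $(s,t)$ has weight $\frac{Xq^{s-2t}+Yq^{2t-s}}{2}$, a down step weight $1$, a path's weight is the product of its step weights, and $\mathrm{gf}(a,b,c,d)$ is the sum of the weights of all paths from $(a,b)$ to $(c,d)$. *)

theory Defs
  imports Complex_Main "Jordan_Normal_Form.Determinant"
begin

definition qpoch :: "'a::comm_ring_1 \<Rightarrow> 'a \<Rightarrow> nat \<Rightarrow> 'a" where
  "qpoch u p n = (\<Prod>j<n. (1 - u * p ^ j))"

text \<open>A lattice path is encoded by its list of steps: True = right step,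
  False = down step.  Weight of a path started at (s,t).\<close>
fun path_weight :: "'a::field \<Rightarrow> 'a \<Rightarrow> 'a \<Rightarrow> int \<Rightarrow> int \<Rightarrow> bool list \<Rightarrow> 'a" where
  "path_weight X Y q s t [] = 1"
| "path_weight X Y q s t (True # p) =
     (X * q powi (s - 2 * t) + Y * q powi (2 * t - s)) / 2 * path_weight X Y q (s + 1) t p"
| "path_weight X Y q s t (False # p) = path_weight X Y q s (t - 1) p"

fun path_end :: "int \<Rightarrow> int \<Rightarrow> bool list \<Rightarrow> int \<times> int" where
  "path_end s t [] = (s, t)"
| "path_end s t (True # p) = path_end (s + 1) t p"
| "path_end s t (False # p) = path_end s (t - 1) p"

text \<open>Every step increases s - t by one, so paths from (a,b) to (c,d) have
  length (c - a) + (b - d); the set below is thus exactly the set of all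
  such paths (and it is finite).\<close>
definition paths :: "int \<Rightarrow> int \<Rightarrow> int \<Rightarrow> int \<Rightarrow> bool list set" where
  "paths a b c d = {p. length p = nat ((c - a) + (b - d)) \<and> path_end a b p = (c, d)}"

definition gf :: "'a::field \<Rightarrow> 'a \<Rightarrow> 'a \<Rightarrow> int \<Rightarrow> int \<Rightarrow> int \<Rightarrow> int \<Rightarrow> 'a" where
  "gf X Y q a b c d = (\<Sum>p\<in>paths a b c d. path_weight X Y q a b p)"

definition gfbar :: "'a::field \<Rightarrow> 'a \<Rightarrow> 'a \<Rightarrow> nat \<Rightarrow> nat \<Rightarrow> 'a" where
  "gfbar X Y q a c = (if a \<le> c then gf X Y q (int a) (int a) (int c) 0 else 0)"

end

theory Submission
  imports Defs
begin

text \<open>The identity holds entry by entry.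
  Splitting a path at its first step gives a two-term recurrence for the path sums.  For paths
  with $k$ down steps and $m$ right steps it is solved by a product of $m$ right-step weights
  times the Gaussian binomial $[k+m, k]_{q^2} / q^{km}$: the X-parts and the Y-parts of the
  recurrence reduce to the two q-Pascal rules.  Consequently
  $\overline{gf}(a+d,c+d) = \overline{gf}(a,c)\, u(c)\, v(a)$, and scaling the rows and columns of
  a matrix multiplies its determinant by the product of the scaling factors.\<close>

lemma det_mat_scale_rows_cols:
  fixes f :: "nat \<Rightarrow> nat \<Rightarrow> 'a::comm_ring_1"
  shows "det (mat n n (\<lambda>(i,j). f i j * (u j * v i))) = det (mat n n (\<lambda>(i,j). f i j)) * (\<Prod>k<n. u k * v k)"
proof -
  have "det (mat n n (\<lambda>(i,j). f i j * (u j * v i))) =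
    (\<Sum>p\<in>{p. p permutes {0..<n}}. signof p * (\<Prod>i = 0..<n. f i (p i) * (u (p i) * v i)))"
    unfolding det_def by simp
  also have "\<dots> = (\<Sum>p\<in>{p. p permutes {0..<n}}. signof p * (\<Prod>i = 0..<n. f i (p i)) * (\<Prod>k<n. u k * v k))"
  proof (intro sum.cong refl)
    fix p assume "p \<in> {p. p permutes {0..<n}}"
    then have pp: "p permutes {0..<n}" by simp
    have "(\<Prod>i = 0..<n. u (p i)) = (\<Prod>i = 0..<n. u i)"
      using prod.permute[OF pp, of u] by (simp add: comp_def)
    then show "signof p * (\<Prod>i = 0..<n. f i (p i) * (u (p i) * v i)) = signof p * (\<Prod>i = 0..<n. f i (p i)) * (\<Prod>k<n. u k * v k)"
      by (simp add: prod.distrib atLeast0LessThan mult.assoc)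
  qed
  also have "\<dots> = det (mat n n (\<lambda>(i,j). f i j)) * (\<Prod>k<n. u k * v k)"
    unfolding det_def by (simp add: sum_distrib_right)
  finally show ?thesis .
qed

definition qfact :: "'a::comm_ring_1 \<Rightarrow> nat \<Rightarrow> 'a" where
  "qfact r n = qpoch r r n"

lemma qfact_0 [simp]: "qfact r 0 = 1"
  by (simp add: qfact_def qpoch_def)

lemma qfact_Suc: "qfact r (Suc n) = qfact r n * (1 - r ^ Suc n)"
  by (simp add: qfact_def qpoch_def mult.commute)

lemma qfact_nonzero:
  fixes r :: "'a::idom"
  assumes "\<And>k. k > 0 \<Longrightarrow> r ^ k \<noteq> 1"
  shows "qfact r n \<noteq> 0"
proof (induction n)
  case (Suc n)
  then show ?case using assms[of "Suc n"] by (simp add: qfact_Suc)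
qed simp

lemma qfact_mult_qpoch: "qfact r d * qpoch (r ^ Suc d) r x = qfact r (x + d)"
proof (induction x)
  case 0
  show ?case by (simp add: qpoch_def)
next
  case (Suc x)
  have "qfact r d * qpoch (r ^ Suc d) r (Suc x) = qfact r (x + d) * (1 - r ^ Suc d * r ^ x)"
    by (simp add: qpoch_def Suc.IH[symmetric] mult.assoc)
  also have "\<dots> = qfact r (Suc x + d)"
    by (simp add: qfact_Suc power_add ac_simps)
  finally show ?case .
qed

definition qbinom :: "'a::field \<Rightarrow> nat \<Rightarrow> nat \<Rightarrow> 'a" where
  "qbinom r k m = qfact r (k + m) / (qfact r k * qfact r m)"

lemma qbinom_commute: "qbinom r k m = qbinom r m k"
  by (simp add: qbinom_def add.commute mult.commute)

context
  fixes r :: "'a::field"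
  assumes generic: "\<And>k. k > 0 \<Longrightarrow> r ^ k \<noteq> 1"
begin

lemma qbinom_0_right [simp]: "qbinom r k 0 = 1"
  using qfact_nonzero[OF generic] by (simp add: qbinom_def)

lemma qbinom_0_left [simp]: "qbinom r 0 m = 1"
  using qbinom_0_right qbinom_commute by metis

lemma qbinom_Suc_Suc:
  "qbinom r (Suc k) (Suc m) = qbinom r (Suc k) m + r ^ Suc m * qbinom r k (Suc m)"
proof -
  define F A B where "F = qfact r (Suc (k + m))" and "A = qfact r k" and "B = qfact r m"
  define u v where "u = 1 - r ^ Suc k" and "v = 1 - r ^ Suc m"
  have nz: "F \<noteq> 0" "A \<noteq> 0" "B \<noteq> 0" "u \<noteq> 0" "v \<noteq> 0"
    using qfact_nonzero[OF generic] generic[of "Suc k"] generic[of "Suc m"]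
    by (auto simp: F_def A_def B_def u_def v_def)
  have w: "1 - r ^ Suc (Suc (k + m)) = v + r ^ Suc m * u"
    by (simp add: u_def v_def algebra_simps power_add[symmetric])
  have "qbinom r (Suc k) (Suc m) = F * (1 - r ^ Suc (Suc (k + m))) / (A * u * (B * v))"
    by (simp add: qbinom_def qfact_Suc F_def A_def B_def u_def v_def)
  also have "\<dots> = F * (v + r ^ Suc m * u) / (A * u * (B * v))"
    by (simp only: w)
  finally have q11: "qbinom r (Suc k) (Suc m) = F * (v + r ^ Suc m * u) / (A * u * (B * v))" .
  have q10: "qbinom r (Suc k) m = F / (A * u * B)" "qbinom r k (Suc m) = F / (A * (B * v))"
    by (simp_all add: qbinom_def qfact_Suc F_def A_def B_def u_def v_def)
  show ?thesis
    unfolding q11 q10 using nz by (simp add: field_simps)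
qed

lemma qbinom_Suc_Suc':
  "qbinom r (Suc k) (Suc m) = r ^ Suc k * qbinom r (Suc k) m + qbinom r k (Suc m)"
  using qbinom_Suc_Suc[of m k] by (simp add: qbinom_commute)

end

definition right_step_weight :: "'a::field \<Rightarrow> 'a \<Rightarrow> 'a \<Rightarrow> int \<Rightarrow> 'a" where
  "right_step_weight X Y q e = (X * q powi e + Y * q powi (- e)) / 2"

definition path_sum :: "'a::field \<Rightarrow> 'a \<Rightarrow> 'a \<Rightarrow> nat \<Rightarrow> int \<Rightarrow> int \<Rightarrow> int \<Rightarrow> int \<Rightarrow> 'a" where
  "path_sum X Y q L s t c d =
     (\<Sum>p | length p = L \<and> path_end s t p = (c, d). path_weight X Y q s t p)"

lemma finite_bool_lists_length: "finite {p :: bool list. length p = L \<and> P p}"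
  by (rule rev_finite_subset[OF finite_lists_length_eq[of "UNIV :: bool set" L]]) auto

lemma path_end_bounds: "path_end s t p = (c, d) \<Longrightarrow> s \<le> c \<and> d \<le> t"
  by (induction s t p rule: path_end.induct) fastforce+

lemma path_sum_eq_0: "c < s \<or> t < d \<Longrightarrow> path_sum X Y q L s t c d = 0"
  unfolding path_sum_def using path_end_bounds by (metis (mono_tags) empty_Collect_eq leD sum.empty)

lemma path_sum_0: "path_sum X Y q 0 s t c d = (if (s, t) = (c, d) then 1 else 0)"
proof -
  have "{p. length p = 0 \<and> path_end s t p = (c, d)} = (if (s, t) = (c, d) then {[]} else {})"
    by auto
  then show ?thesis
    unfolding path_sum_def by simp
qed

lemma path_sum_Suc:
  "path_sum X Y q (Suc L) s t c d =
     right_step_weight X Y q (s - 2 * t) * path_sum X Y q L (s + 1) t c d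
     + path_sum X Y q L s (t - 1) c d"
proof -
  let ?R = "{p. length p = L \<and> path_end (s + 1) t p = (c, d)}"
  let ?D = "{p. length p = L \<and> path_end s (t - 1) p = (c, d)}"
  have split: "{p. length p = Suc L \<and> path_end s t p = (c, d)} = Cons True ` ?R \<union> Cons False ` ?D"
  proof (rule Set.set_eqI)
    fix p :: "bool list"
    show "p \<in> {p. length p = Suc L \<and> path_end s t p = (c, d)} \<longleftrightarrow> p \<in> Cons True ` ?R \<union> Cons False ` ?D"
    proof (cases p)
      case (Cons b p')
      then show ?thesis by (cases b) auto
    qed auto
  qed
  have "path_sum X Y q (Suc L) s t c d =
      sum (path_weight X Y q s t \<circ> Cons True) ?R + sum (path_weight X Y q s t \<circ> Cons False) ?D"
    unfolding path_sum_def split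
    by (subst sum.union_disjoint) (auto simp: finite_bool_lists_length sum.reindex)
  then show ?thesis
    by (simp add: path_sum_def right_step_weight_def sum_distrib_left)
qed

text \<open>The closed form of the path sum from $(s,k)$ to $(s+m,0)$, with $e = s - k$.\<close>

definition gf_closed :: "'a::field \<Rightarrow> 'a \<Rightarrow> 'a \<Rightarrow> nat \<Rightarrow> nat \<Rightarrow> int \<Rightarrow> 'a" where
  "gf_closed X Y q k m e =
     (\<Prod>j<m. right_step_weight X Y q (e + int j)) * qbinom (q\<^sup>2) k m / q ^ (k * m)"

context
  fixes q :: "'a::field"
  assumes q_nonzero: "q \<noteq> 0" and generic: "\<And>k. k > 0 \<Longrightarrow> (q\<^sup>2) ^ k \<noteq> 1"
begin

lemma gf_closed_right_0: "gf_closed X Y q k 0 e = 1"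
  by (simp add: gf_closed_def generic)

lemma gf_closed_0_Suc:
  "gf_closed X Y q 0 (Suc m) e = right_step_weight X Y q e * gf_closed X Y q 0 m (e + 1)"
  unfolding gf_closed_def prod.lessThan_Suc_shift by (simp add: generic add_ac)

lemma gf_closed_Suc_Suc:
  "gf_closed X Y q (Suc k) (Suc m) e =
     right_step_weight X Y q (e - int (Suc k)) * gf_closed X Y q (Suc k) m (e + 1)
     + gf_closed X Y q k (Suc m) (e + 1)"
proof -
  \<comment> \<open>naming the factor 1/2 keeps \<open>field_simps\<close> from requiring \<open>2 \<noteq> 0\<close>\<close>
  define h :: 'a where "h = 1 / 2"
  define P where "P = (\<Prod>j<m. right_step_weight X Y q (e + 1 + int j))"
  define z where "z = q powi e"
  define K M where "K = q ^ Suc k" and "M = q ^ Suc m"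
  define D where "D = q ^ (Suc k * Suc m)"
  define B11 B10 B01 where "B11 = qbinom (q\<^sup>2) (Suc k) (Suc m)"
    and "B10 = qbinom (q\<^sup>2) (Suc k) m" and "B01 = qbinom (q\<^sup>2) k (Suc m)"
  have nz: "z \<noteq> 0" "K \<noteq> 0" "M \<noteq> 0" "D \<noteq> 0"
    using q_nonzero by (simp_all add: z_def K_def M_def D_def)
  have square: "(q\<^sup>2) ^ n = (q ^ n)\<^sup>2" for n
    by (metis power_mult mult.commute)
  have pascal: "B11 = B10 + M\<^sup>2 * B01" "B11 = K\<^sup>2 * B10 + B01"
    unfolding B11_def B10_def B01_def K_def M_def square[symmetric]
    using qbinom_Suc_Suc[OF generic] qbinom_Suc_Suc'[OF generic] by blast+
  have weights: "right_step_weight X Y q e = (X * z + Y / z) * h"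
    "right_step_weight X Y q (e - int (Suc k)) = (X * z / K + Y * K / z) * h"
    "right_step_weight X Y q (e + 1 + int m) = (X * z * M + Y / (z * M)) * h"
    using q_nonzero
    by (simp_all add: right_step_weight_def h_def z_def K_def M_def power_int_diff power_int_add
        power_int_minus field_simps)
  have powers: "q ^ (Suc k * m) = D / K" "q ^ (k * Suc m) = D / M"
    using q_nonzero by (simp_all add: D_def K_def M_def field_simps flip: power_add)
  have lhs: "gf_closed X Y q (Suc k) (Suc m) e = (X * z + Y / z) * h * P * B11 / D"
    unfolding gf_closed_def prod.lessThan_Suc_shift
    by (simp add: P_def B11_def D_def weights add_ac)
  have rhs: "gf_closed X Y q (Suc k) m (e + 1) = P * B10 / (D / K)"
    "gf_closed X Y q k (Suc m) (e + 1) = P * ((X * z * M + Y / (z * M)) * h) * B01 / (D / M)"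
    unfolding gf_closed_def powers
    by (simp_all add: P_def B10_def B01_def weights[symmetric] add_ac)
  have "(X * z + Y / z) * h * P * B11 / D = P / D * ((X * z + Y / z) * B11 * h)"
    by (simp add: ac_simps)
  also have "(X * z + Y / z) * B11 = X * z * (B10 + M\<^sup>2 * B01) + Y / z * (K\<^sup>2 * B10 + B01)"
    by (simp only: pascal[symmetric] distrib_right)
  also have "P / D * (\<dots> * h) =
      (X * z / K + Y * K / z) * h * (P * B10 / (D / K))
      + P * ((X * z * M + Y / (z * M)) * h) * B01 / (D / M)"
    using nz by (simp add: field_simps power2_eq_square)
  finally show ?thesis
    unfolding lhs rhs weights .
qed

lemma path_sum_eq_gf_closed:
  "path_sum X Y q (k + m) s (int k) (s + int m) 0 = gf_closed X Y q k m (s - int k)"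
proof (induction "k + m" arbitrary: k m s)
  case 0
  then show ?case by (simp add: path_sum_0 gf_closed_right_0)
next
  case (Suc L)
  have IH: "path_sum X Y q L s' (int k') (s' + int m') 0 = gf_closed X Y q k' m' (s' - int k')"
    if "L = k' + m'" for k' m' s' using Suc.hyps(1) that by blast
  show ?case
  proof (cases k)
    case 0
    then obtain m' where m: "m = Suc m'" "L = m'" using Suc.hyps(2) by (cases m) auto
    have "path_sum X Y q L (s + 1) 0 (s + int m) 0 = gf_closed X Y q 0 m' (s + 1)"
      using IH[of 0 m' "s + 1"] m by (simp add: add_ac)
    then show ?thesis
      using 0 m by (simp add: path_sum_Suc path_sum_eq_0 gf_closed_0_Suc)
  next
    case (Suc k')
    show ?thesis
    proof (cases m)
      case 0
      then show ?thesis
        using Suc Suc.hyps(2) IH[of k' 0 s]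
        by (simp add: path_sum_Suc path_sum_eq_0 gf_closed_right_0)
    next
      case (Suc m')
      have "path_sum X Y q (k + m) s (int k) (s + int m) 0 =
          right_step_weight X Y q (s - 2 * int k) * path_sum X Y q L (s + 1) (int k) (s + int m) 0
          + path_sum X Y q L s (int k') (s + int m) 0"
        unfolding Suc.hyps(2)[symmetric] path_sum_Suc using \<open>k = Suc k'\<close> by simp
      also have "path_sum X Y q L (s + 1) (int k) (s + int m) 0 = gf_closed X Y q k m' (s - int k')"
        using IH[of k m' "s + 1"] \<open>k = Suc k'\<close> Suc Suc.hyps(2) by (simp add: add_ac)
      also have "path_sum X Y q L s (int k') (s + int m) 0 = gf_closed X Y q k' m (s - int k')"
        using IH[of k' m s] \<open>k = Suc k'\<close> Suc Suc.hyps(2) by simp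
      also have "right_step_weight X Y q (s - 2 * int k) * gf_closed X Y q k m' (s - int k')
          + gf_closed X Y q k' m (s - int k') = gf_closed X Y q k m (s - int k)"
        using gf_closed_Suc_Suc[of X Y k' m' "s - int k"] \<open>k = Suc k'\<close> Suc
        by (simp add: algebra_simps)
      finally show ?thesis .
    qed
  qed
qed

lemma gfbar_eq_gf_closed: "gfbar X Y q a (a + m) = gf_closed X Y q a m 0"
proof -
  have "gfbar X Y q a (a + m) = path_sum X Y q (a + m) (int a) (int a) (int a + int m) 0"
    by (simp add: gfbar_def gf_def paths_def path_sum_def add.commute flip: of_nat_add)
  then show ?thesis
    by (simp add: path_sum_eq_gf_closed)
qed

lemma gfbar_shift:
  "gfbar X Y q (a + d) (c + d) = gfbar X Y q a c *
     (qpoch (q ^ (2 * d + 2)) (q\<^sup>2) c / (q ^ (d * c) * qpoch (q\<^sup>2) (q\<^sup>2) c)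
      * (q ^ (d * a) * qpoch (q\<^sup>2) (q\<^sup>2) a / qpoch (q ^ (2 * d + 2)) (q\<^sup>2) a))"
proof (cases "a \<le> c")
  case True
  then obtain m where c: "c = a + m" using le_Suc_ex by blast
  define F where "F = qfact (q\<^sup>2)"
  have nz: "F n \<noteq> 0" "q ^ n \<noteq> 0" for n
    using qfact_nonzero[OF generic] q_nonzero by (simp_all add: F_def)
  have shifted: "qpoch (q ^ (2 * d + 2)) (q\<^sup>2) x = F (x + d) / F d" for x
  proof -
    have "q ^ (2 * d + 2) = (q\<^sup>2) ^ Suc d"
      unfolding power_mult[symmetric] by (simp add: mult_2_right)
    then show ?thesis
      using qfact_mult_qpoch[of "q\<^sup>2" d x] nz by (simp add: F_def field_simps add.commute)
  qed
  have "gf_closed X Y q (a + d) m 0 = gf_closed X Y q a m 0 *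
      (F (c + d) / F d / (q ^ (d * c) * F c) * (q ^ (d * a) * F a / (F (a + d) / F d)))"
    unfolding gf_closed_def qbinom_def F_def[symmetric] c
    using nz q_nonzero by (simp add: field_simps power_add add_ac add_mult_distrib add_mult_distrib2)
  then show ?thesis
    unfolding c shifted qfact_def[symmetric] F_def[symmetric]
    using gfbar_eq_gf_closed[of X Y a m] gfbar_eq_gf_closed[of X Y "a + d" m]
    by (simp add: add_ac)
qed (simp add: gfbar_def)

end

theorem mainTheorem8:
  fixes X Y q :: "'a::field_char_0"
    and n d :: nat and a c :: "nat \<Rightarrow> nat"
  assumes q_nz: "q \<noteq> 0"
    and q_generic: "\<And>k::nat. k > 0 \<Longrightarrow> q ^ k \<noteq> 1"
    and n_pos: "n > 0"
    and a_mono: "\<And>i j. i < j \<Longrightarrow> j < n \<Longrightarrow> a i < a j"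
    and c_mono: "\<And>i j. i < j \<Longrightarrow> j < n \<Longrightarrow> c i < c j"
    and a_le_c: "\<And>i. i < n \<Longrightarrow> a i \<le> c i"
  shows "det (mat n n (\<lambda>(i, j). gfbar X Y q (a i + d) (c j + d))) =
         det (mat n n (\<lambda>(i, j). gfbar X Y q (a i) (c j))) *
         (\<Prod>k<n. (qpoch (q ^ (2 * d + 2)) (q ^ 2) (c k)
                     / (q ^ (d * c k) * qpoch (q ^ 2) (q ^ 2) (c k)))
                  * (q ^ (d * a k) * qpoch (q ^ 2) (q ^ 2) (a k)
                     / qpoch (q ^ (2 * d + 2)) (q ^ 2) (a k)))"
proof -
  have generic: "(q\<^sup>2) ^ k \<noteq> 1" if "k > 0" for k
    using q_generic[of "2 * k"] that by (simp add: power_mult)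
  define u where "u x = qpoch (q ^ (2 * d + 2)) (q ^ 2) x / (q ^ (d * x) * qpoch (q ^ 2) (q ^ 2) x)"
    for x
  define v where "v x = q ^ (d * x) * qpoch (q ^ 2) (q ^ 2) x / qpoch (q ^ (2 * d + 2)) (q ^ 2) x"
    for x
  have "mat n n (\<lambda>(i, j). gfbar X Y q (a i + d) (c j + d)) =
        mat n n (\<lambda>(i, j). gfbar X Y q (a i) (c j) * (u (c j) * v (a i)))"
    by (rule cong_mat) (simp_all add: gfbar_shift[OF q_nz generic] u_def v_def)
  then show ?thesis
    using det_mat_scale_rows_cols[where f = "\<lambda>i j. gfbar X Y q (a i) (c j)"
        and u = "\<lambda>j. u (c j)" and v = "\<lambda>i. v (a i)" and n = n]
    by (simp add: u_def v_def)
qed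

end
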